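(* Let $K\subseteq L\subseteq \mathfrak U\subseteq\mathcal A$ be differential fields of characteristic $0$, where $\mathcal A$ is a saturated differentially closed field with $|\mathfrak U|<|\mathcal A|$, and suppose $L/K$ is a strongly normal extension. Then there is an embedding of the group $gal(L/K)$ into the group $Gal(L/K)$. Moreover, every $\sigma\in Hom_K(L,\mathfrak U)$ extends uniquely to an element of $Gal(L/K)$, and this extension restricts to an element of $Gal_{\mathfrak U}(L/K)$.
   Context: For a differential field $F$, $C_F$ is its field of constants. $\langle A,B\rangle$ denotes the differential field generated by $A\cup B$ inside $\mathcal A$. $Hom_K(L,M)$ is the set of differential field embeddings of $L$ into $M$ that fix $K$ pointwise. An element $\tau\in Hom_K(L,\mathcal A)$ is strong if $\tau$ is the identity on $C_L$ and $\langle L,C_{\mathcal A}\rangle=\langle\tau(L),C_{\mathcal A}\rangle$. $L/K$ is strongly normal if $L$ is finitely generated as a differential field over $K$ and every $\tau\in Hom_K(L,\mathcal A)$ is strong. $gal(L/K)$ is the group of differential field automorphisms of $L$ fixing $K$; $Gal(L/K)$ is the group of differential field automorphisms of $\langle L,C_{\mathcal A}\rangle$ fixing $\langle K,C_{\mathcal A}\rangle$ pointwise; $Gal_{\mathfrak U}(L/K)$ is the group of differential field automorphisms of $\langle L,C_{\mathfrak U}\rangle$ fixing $\langle K,C_{\mathfrak U}\rangle$ pointwise. *)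

theory Defs
  imports "HOL-Library.Poly_Mapping" "HOL-Library.FuncSet"
begin

text \<open>The ambient field A is the type 'a (of characteristic 0) with derivation D;
  differential subfields are subsets of it.\<close>

definition derivation :: "('a::field \<Rightarrow> 'a) \<Rightarrow> bool" where
  "derivation D \<longleftrightarrow> (\<forall>x y. D (x + y) = D x + D y) \<and> (\<forall>x y. D (x * y) = D x * y + x * D y)"

definition dsubfield :: "('a::field \<Rightarrow> 'a) \<Rightarrow> 'a set \<Rightarrow> bool" where
  "dsubfield D F \<longleftrightarrow> 0 \<in> F \<and> 1 \<in> F \<and>
     (\<forall>x\<in>F. \<forall>y\<in>F. x + y \<in> F \<and> x * y \<in> F) \<and>
     (\<forall>x\<in>F. - x \<in> F \<and> inverse x \<in> F \<and> D x \<in> F)"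

definition dgen :: "('a::field \<Rightarrow> 'a) \<Rightarrow> 'a set \<Rightarrow> 'a set" where
  "dgen D S = \<Inter> {F. dsubfield D F \<and> S \<subseteq> F}"

definition consts_of :: "('a::field \<Rightarrow> 'a) \<Rightarrow> 'a set \<Rightarrow> 'a set" where
  "consts_of D F = {x \<in> F. D x = 0}"

definition dHom :: "('a::field \<Rightarrow> 'a) \<Rightarrow> 'a set \<Rightarrow> 'a set \<Rightarrow> 'a set \<Rightarrow> ('a \<Rightarrow> 'a) set" where
  "dHom D K L M = {\<tau>. \<tau> \<in> extensional L \<and> inj_on \<tau> L \<and> \<tau> ` L \<subseteq> M \<and> \<tau> 1 = 1 \<and>
     (\<forall>x\<in>L. \<forall>y\<in>L. \<tau> (x + y) = \<tau> x + \<tau> y \<and> \<tau> (x * y) = \<tau> x * \<tau> y) \<and>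
     (\<forall>x\<in>L. \<tau> (D x) = D (\<tau> x)) \<and> (\<forall>x\<in>K. \<tau> x = x)}"

definition strong :: "('a::field \<Rightarrow> 'a) \<Rightarrow> 'a set \<Rightarrow> ('a \<Rightarrow> 'a) \<Rightarrow> bool" where
  "strong D L \<tau> \<longleftrightarrow> (\<forall>x\<in>consts_of D L. \<tau> x = x) \<and>
     dgen D (L \<union> consts_of D UNIV) = dgen D (\<tau> ` L \<union> consts_of D UNIV)"

definition strongly_normal :: "('a::field \<Rightarrow> 'a) \<Rightarrow> 'a set \<Rightarrow> 'a set \<Rightarrow> bool" where
  "strongly_normal D K L \<longleftrightarrow> dsubfield D K \<and> dsubfield D L \<and> K \<subseteq> L \<and>
     (\<exists>S. finite S \<and> L = dgen D (K \<union> S)) \<and>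
     (\<forall>\<tau>\<in>dHom D K L UNIV. strong D L \<tau>)"

definition daut :: "('a::field \<Rightarrow> 'a) \<Rightarrow> 'a set \<Rightarrow> 'a set \<Rightarrow> ('a \<Rightarrow> 'a) set" where
  "daut D K M = {\<sigma> \<in> dHom D K M M. \<sigma> ` M = M}"

definition gal_small :: "('a::field \<Rightarrow> 'a) \<Rightarrow> 'a set \<Rightarrow> 'a set \<Rightarrow> ('a \<Rightarrow> 'a) set" where
  "gal_small D K L = daut D K L"

definition Gal :: "('a::field \<Rightarrow> 'a) \<Rightarrow> 'a set \<Rightarrow> 'a set \<Rightarrow> ('a \<Rightarrow> 'a) set" where
  "Gal D K L = daut D (dgen D (K \<union> consts_of D UNIV)) (dgen D (L \<union> consts_of D UNIV))"

definition Gal_in :: "('a::field \<Rightarrow> 'a) \<Rightarrow> 'a set \<Rightarrow> 'a set \<Rightarrow> 'a set \<Rightarrow> ('a \<Rightarrow> 'a) set" where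
  "Gal_in D U K L = daut D (dgen D (K \<union> consts_of D U)) (dgen D (L \<union> consts_of D U))"

definition group_embedding ::
  "'a set \<Rightarrow> ('a \<Rightarrow> 'a) set \<Rightarrow> 'a set \<Rightarrow> ('a \<Rightarrow> 'a) set \<Rightarrow> (('a \<Rightarrow> 'a) \<Rightarrow> ('a \<Rightarrow> 'a)) \<Rightarrow> bool" where
  "group_embedding M1 G1 M2 G2 \<Phi> \<longleftrightarrow> \<Phi> ` G1 \<subseteq> G2 \<and> inj_on \<Phi> G1 \<and>
     (\<forall>\<sigma>\<in>G1. \<forall>\<tau>\<in>G1. \<Phi> (compose M1 \<sigma> \<tau>) = compose M2 (\<Phi> \<sigma>) (\<Phi> \<tau>))"

section \<open>Differential closedness (Blum axioms)\<close>

text \<open>Differential polynomials in one variable x over A: monomials in x, x', x'', ...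
  are finitely supported maps nat => nat (exponent of the k-th derivative).\<close>
definition dpeval :: "('a::field \<Rightarrow> 'a) \<Rightarrow> ((nat \<Rightarrow>\<^sub>0 nat) \<Rightarrow>\<^sub>0 'a) \<Rightarrow> 'a \<Rightarrow> 'a" where
  "dpeval D P a = (\<Sum>m\<in>Poly_Mapping.keys P. Poly_Mapping.lookup P m * (\<Prod>k\<in>Poly_Mapping.keys (m::nat \<Rightarrow>\<^sub>0 nat). ((D ^^ k) a) ^ Poly_Mapping.lookup m k))"

definition diff_closed :: "('a::field \<Rightarrow> 'a) \<Rightarrow> bool" where
  "diff_closed D \<longleftrightarrow> (\<forall>(f::(nat \<Rightarrow>\<^sub>0 nat) \<Rightarrow>\<^sub>0 'a) (g::(nat \<Rightarrow>\<^sub>0 nat) \<Rightarrow>\<^sub>0 'a) (n::nat).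
     (\<exists>m\<in>Poly_Mapping.keys f. Poly_Mapping.lookup m n \<noteq> 0) \<and> (\<forall>m\<in>Poly_Mapping.keys f. \<forall>k\<in>Poly_Mapping.keys m. k \<le> n) \<and>
     g \<noteq> 0 \<and> (\<forall>m\<in>Poly_Mapping.keys g. \<forall>k\<in>Poly_Mapping.keys m. k < n)
     \<longrightarrow> (\<exists>a. dpeval D f a = 0 \<and> dpeval D g a \<noteq> 0))"

datatype 'a dterm = DVar nat | DPar 'a | DZero | DOne | DAdd "'a dterm" "'a dterm"
  | DNeg "'a dterm" | DMul "'a dterm" "'a dterm" | DDer "'a dterm"

datatype 'a dform = FEq "'a dterm" "'a dterm" | FNot "'a dform" | FAnd "'a dform" "'a dform"
  | FEx nat "'a dform"

fun tval :: "('a::field \<Rightarrow> 'a) \<Rightarrow> (nat \<Rightarrow> 'a) \<Rightarrow> 'a dterm \<Rightarrow> 'a" where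
  "tval D e (DVar n) = e n"
| "tval D e (DPar a) = a"
| "tval D e DZero = 0"
| "tval D e DOne = 1"
| "tval D e (DAdd s t) = tval D e s + tval D e t"
| "tval D e (DNeg t) = - tval D e t"
| "tval D e (DMul s t) = tval D e s * tval D e t"
| "tval D e (DDer t) = D (tval D e t)"

fun fsat :: "('a::field \<Rightarrow> 'a) \<Rightarrow> (nat \<Rightarrow> 'a) \<Rightarrow> 'a dform \<Rightarrow> bool" where
  "fsat D e (FEq s t) = (tval D e s = tval D e t)"
| "fsat D e (FNot \<phi>) = (\<not> fsat D e \<phi>)"
| "fsat D e (FAnd \<phi> \<psi>) = (fsat D e \<phi> \<and> fsat D e \<psi>)"
| "fsat D e (FEx n \<phi>) = (\<exists>a. fsat D (e(n := a)) \<phi>)"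

fun tvars :: "'a dterm \<Rightarrow> nat set" where
  "tvars (DVar n) = {n}"
| "tvars (DPar a) = {}"
| "tvars DZero = {}"
| "tvars DOne = {}"
| "tvars (DAdd s t) = tvars s \<union> tvars t"
| "tvars (DNeg t) = tvars t"
| "tvars (DMul s t) = tvars s \<union> tvars t"
| "tvars (DDer t) = tvars t"

fun tpars :: "'a dterm \<Rightarrow> 'a set" where
  "tpars (DVar n) = {}"
| "tpars (DPar a) = {a}"
| "tpars DZero = {}"
| "tpars DOne = {}"
| "tpars (DAdd s t) = tpars s \<union> tpars t"
| "tpars (DNeg t) = tpars t"
| "tpars (DMul s t) = tpars s \<union> tpars t"
| "tpars (DDer t) = tpars t"

fun fvars :: "'a dform \<Rightarrow> nat set" where
  "fvars (FEq s t) = tvars s \<union> tvars t"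
| "fvars (FNot \<phi>) = fvars \<phi>"
| "fvars (FAnd \<phi> \<psi>) = fvars \<phi> \<union> fvars \<psi>"
| "fvars (FEx n \<phi>) = fvars \<phi> - {n}"

fun fpars :: "'a dform \<Rightarrow> 'a set" where
  "fpars (FEq s t) = tpars s \<union> tpars t"
| "fpars (FNot \<phi>) = fpars \<phi>"
| "fpars (FAnd \<phi> \<psi>) = fpars \<phi> \<union> fpars \<psi>"
| "fpars (FEx n \<phi>) = fpars \<phi>"

definition saturated :: "('a::field \<Rightarrow> 'a) \<Rightarrow> bool" where
  "saturated D \<longleftrightarrow> (\<forall>B \<Phi>. (card_of B, card_of (UNIV :: 'a set)) \<in> ordLess \<and>
     (\<forall>\<phi>\<in>\<Phi>. fpars \<phi> \<subseteq> B \<and> fvars \<phi> \<subseteq> {0}) \<and>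
     (\<forall>\<Phi>0. \<Phi>0 \<subseteq> \<Phi> \<and> finite \<Phi>0 \<longrightarrow> (\<exists>a. \<forall>\<phi>\<in>\<Phi>0. fsat D (\<lambda>_. a) \<phi>))
     \<longrightarrow> (\<exists>a. \<forall>\<phi>\<in>\<Phi>. fsat D (\<lambda>_. a) \<phi>))"

end

theory Submission
  imports Defs "HOL-Library.Nat_Bijection"
begin

(*
  Every element of <L, C> (C the constants of the ambient field) is a quotient
  (sum b_i c_i) / (sum a_i c_i) with a_i, b_i in L and constants c_i. An embedding tau of L fixing
  the constants of L preserves every relation sum a_i c_i = 0: normalizing and differentiating
  reduces it to a relation with constant coefficients in L, which tau fixes. Hence tau extends to
  <L, C> by acting on the coefficients, and strongness makes the extension onto. Automorphisms of
  <L, C> over <K, C> are determined by their restriction to L, which gives the embedding of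
  gal(L/K). For sigma : L -> U the same reduction, now carried out inside U, shows that
  <L, C> and U meet inside <L, C_U>, so <L, C_U> = <sigma L, C_U> is mapped onto itself.
*)

section \<open>Differential subfields and their homomorphisms\<close>

lemma dsubfieldD:
  assumes "dsubfield D F"
  shows "0 \<in> F" "1 \<in> F" "x \<in> F \<Longrightarrow> y \<in> F \<Longrightarrow> x + y \<in> F" "x \<in> F \<Longrightarrow> y \<in> F \<Longrightarrow> x * y \<in> F"
    "x \<in> F \<Longrightarrow> - x \<in> F" "x \<in> F \<Longrightarrow> inverse x \<in> F" "x \<in> F \<Longrightarrow> D x \<in> F"
    "x \<in> F \<Longrightarrow> y \<in> F \<Longrightarrow> x - y \<in> F" "x \<in> F \<Longrightarrow> y \<in> F \<Longrightarrow> x / y \<in> F"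
  using assms unfolding dsubfield_def diff_conv_add_uminus divide_inverse by blast+

lemma dsubfield_sum:
  assumes "dsubfield D F" "\<And>i. i \<in> I \<Longrightarrow> f i \<in> F"
  shows "sum f I \<in> F"
  using assms(2) by (induction I rule: infinite_finite_induct) (simp_all add: dsubfieldD[OF assms(1)])

lemma dsubfield_dgen: "dsubfield D (dgen D S)"
  unfolding dsubfield_def dgen_def by auto

lemma dgen_superset: "S \<subseteq> dgen D S"
  unfolding dgen_def by auto

lemma dgen_least: "dsubfield D G \<Longrightarrow> S \<subseteq> G \<Longrightarrow> dgen D S \<subseteq> G"
  unfolding dgen_def by auto

lemma dgen_mono: "S \<subseteq> T \<Longrightarrow> dgen D S \<subseteq> dgen D T"
  unfolding dgen_def by auto

definition ring_hom_on :: "'a::field set \<Rightarrow> ('a \<Rightarrow> 'a) \<Rightarrow> bool" where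
  "ring_hom_on M f \<longleftrightarrow> f 1 = 1 \<and> (\<forall>x\<in>M. \<forall>y\<in>M. f (x + y) = f x + f y \<and> f (x * y) = f x * f y)"

definition dhom_on :: "('a::field \<Rightarrow> 'a) \<Rightarrow> 'a set \<Rightarrow> ('a \<Rightarrow> 'a) \<Rightarrow> bool" where
  "dhom_on D M f \<longleftrightarrow> ring_hom_on M f \<and> (\<forall>x\<in>M. f (D x) = D (f x))"

lemma ring_hom_onD:
  assumes M: "dsubfield D M" and f: "ring_hom_on M f"
  shows "f 1 = 1" "f 0 = 0" "x \<in> M \<Longrightarrow> y \<in> M \<Longrightarrow> f (x + y) = f x + f y"
    "x \<in> M \<Longrightarrow> y \<in> M \<Longrightarrow> f (x * y) = f x * f y" "x \<in> M \<Longrightarrow> f (- x) = - f x"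
    "x \<in> M \<Longrightarrow> y \<in> M \<Longrightarrow> f (x - y) = f x - f y" "x \<in> M \<Longrightarrow> f (inverse x) = inverse (f x)"
proof -
  show one: "f 1 = 1" and add: "\<And>x y. x \<in> M \<Longrightarrow> y \<in> M \<Longrightarrow> f (x + y) = f x + f y"
    and mult: "\<And>x y. x \<in> M \<Longrightarrow> y \<in> M \<Longrightarrow> f (x * y) = f x * f y"
    using f unfolding ring_hom_on_def by auto
  have "f 0 + f 0 = f 0 + 0" using add[of 0 0] dsubfieldD(1)[OF M] by simp
  then show zero: "f 0 = 0" by (rule add_left_imp_eq)
  show minus: "f (- x) = - f x" if "x \<in> M" for x
    using add[OF that dsubfieldD(5)[OF M that]] zero by (simp add: eq_neg_iff_add_eq_0 add.commute)
  show "f (x - y) = f x - f y" if "x \<in> M" "y \<in> M" for x y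
    using add[OF that(1) dsubfieldD(5)[OF M that(2)]] minus[OF that(2)] by simp
  show "f (inverse x) = inverse (f x)" if "x \<in> M" for x
  proof (cases "x = 0")
    case True then show ?thesis using zero by simp
  next
    case False
    have "f x * f (inverse x) = 1" using mult[OF that dsubfieldD(6)[OF M that]] False one by simp
    then show ?thesis by (metis inverse_unique)
  qed
qed

lemma dHom_dhom_on: "\<tau> \<in> dHom D K L X \<Longrightarrow> dhom_on D L \<tau>"
  unfolding dHom_def dhom_on_def ring_hom_on_def by auto

lemma dHom_mono: "X \<subseteq> Y \<Longrightarrow> dHom D K L X \<subseteq> dHom D K L Y"
  unfolding dHom_def by auto

lemma dhom_on_eq_on_dgen:
  assumes M: "dsubfield D M" and f: "dhom_on D M f" and h: "dhom_on D M h"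
    and "S \<subseteq> M" and "\<forall>x\<in>S. f x = h x" and "x \<in> dgen D S"
  shows "f x = h x"
proof -
  have rf: "ring_hom_on M f" and rh: "ring_hom_on M h" using f h unfolding dhom_on_def by auto
  have "dsubfield D {x \<in> M. f x = h x}"
    using ring_hom_onD[OF M rf] ring_hom_onD[OF M rh] dsubfieldD[OF M] f h
    unfolding dsubfield_def dhom_on_def by auto
  then have "dgen D S \<subseteq> {x \<in> M. f x = h x}" using assms(4,5) by (intro dgen_least) auto
  then show ?thesis using assms(6) by auto
qed

lemma dsubfield_image:
  assumes M: "dsubfield D M" and f: "dhom_on D M f"
  shows "dsubfield D (f ` M)"
  unfolding dsubfield_def
proof (intro conjI ballI)
  have r: "ring_hom_on M f" and d: "\<And>x. x \<in> M \<Longrightarrow> f (D x) = D (f x)"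
    using f unfolding dhom_on_def by auto
  note h = ring_hom_onD[OF M r] and m = dsubfieldD[OF M]
  show "0 \<in> f ` M" "1 \<in> f ` M" using h(1,2) m(1,2) by (metis image_eqI)+
  fix x y assume "x \<in> f ` M" "y \<in> f ` M"
  then obtain x0 y0 where xy0: "x0 \<in> M" "y0 \<in> M" and xy: "x = f x0" "y = f y0" by auto
  have "x + y = f (x0 + y0)" "x * y = f (x0 * y0)" "- x = f (- x0)" "inverse x = f (inverse x0)"
    "D x = f (D x0)"
    unfolding xy using h(3,4,5,7) d xy0 by simp_all
  then show "x + y \<in> f ` M" "x * y \<in> f ` M" "- x \<in> f ` M" "inverse x \<in> f ` M" "D x \<in> f ` M"
    using m(3,4)[OF xy0] m(5-7)[OF xy0(1)] by (metis image_eqI)+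
qed

lemma dsubfield_preimage:
  assumes M: "dsubfield D M" and N: "dsubfield D N" and f: "dhom_on D M f"
  shows "dsubfield D {x \<in> M. f x \<in> N}"
  unfolding dsubfield_def
proof (intro conjI ballI)
  have r: "ring_hom_on M f" and d: "\<And>x. x \<in> M \<Longrightarrow> f (D x) = D (f x)"
    using f unfolding dhom_on_def by auto
  note h = ring_hom_onD[OF M r] and m = dsubfieldD[OF M] and n = dsubfieldD[OF N]
  show "0 \<in> {x \<in> M. f x \<in> N}" "1 \<in> {x \<in> M. f x \<in> N}" using h(1,2) m(1,2) n(1,2) by simp_all
  fix x y assume "x \<in> {x \<in> M. f x \<in> N}" "y \<in> {x \<in> M. f x \<in> N}"
  then have xy: "x \<in> M" "y \<in> M" "f x \<in> N" "f y \<in> N" by auto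
  show "x + y \<in> {x \<in> M. f x \<in> N}" "x * y \<in> {x \<in> M. f x \<in> N}" "- x \<in> {x \<in> M. f x \<in> N}"
    "inverse x \<in> {x \<in> M. f x \<in> N}" "D x \<in> {x \<in> M. f x \<in> N}"
    using xy h(3,4,5,7) d m(3-7) n(3-7) by simp_all
qed

lemma image_dgen:
  assumes M: "dsubfield D M" and f: "dhom_on D M f" and S: "S \<subseteq> M"
  shows "f ` dgen D S = dgen D (f ` S)"
proof
  have "dsubfield D {x \<in> M. f x \<in> dgen D (f ` S)}"
    by (rule dsubfield_preimage[OF M dsubfield_dgen f])
  then have "dgen D S \<subseteq> {x \<in> M. f x \<in> dgen D (f ` S)}"
    using S dgen_superset[of "f ` S" D] by (intro dgen_least) auto
  then show "f ` dgen D S \<subseteq> dgen D (f ` S)" by auto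
next
  have "dgen D S \<subseteq> M" using dgen_least[OF M S] .
  then have "dhom_on D (dgen D S) f" using f unfolding dhom_on_def ring_hom_on_def by blast
  then have "dsubfield D (f ` dgen D S)" by (rule dsubfield_image[OF dsubfield_dgen])
  then show "dgen D (f ` S) \<subseteq> f ` dgen D S"
    using dgen_superset[of S D] by (intro dgen_least) auto
qed

lemma dHomD:
  assumes "\<tau> \<in> dHom D K L M"
  shows "\<tau> \<in> extensional L" "inj_on \<tau> L" "x \<in> L \<Longrightarrow> \<tau> x \<in> M" "\<tau> 1 = 1"
    "x \<in> L \<Longrightarrow> y \<in> L \<Longrightarrow> \<tau> (x + y) = \<tau> x + \<tau> y"
    "x \<in> L \<Longrightarrow> y \<in> L \<Longrightarrow> \<tau> (x * y) = \<tau> x * \<tau> y"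
    "x \<in> L \<Longrightarrow> \<tau> (D x) = D (\<tau> x)" "x \<in> K \<Longrightarrow> \<tau> x = x"
  using assms unfolding dHom_def by auto

lemma compose_daut:
  assumes M: "dsubfield D M" and \<sigma>: "\<sigma> \<in> daut D K M" and \<tau>: "\<tau> \<in> daut D K M"
  shows "compose M \<sigma> \<tau> \<in> daut D K M"
proof -
  have s: "\<sigma> \<in> dHom D K M M" "\<sigma> ` M = M" and t: "\<tau> \<in> dHom D K M M" "\<tau> ` M = M"
    using \<sigma> \<tau> unfolding daut_def by auto
  note sD = dHomD[OF s(1)] and tD = dHomD[OF t(1)]
  have comp: "compose M \<sigma> \<tau> x = \<sigma> (\<tau> x)" if "x \<in> M" for x
    using that by (simp add: compose_def)
  have inj: "inj_on (compose M \<sigma> \<tau>) M"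
  proof (rule inj_onI)
    fix x y assume "x \<in> M" "y \<in> M" "compose M \<sigma> \<tau> x = compose M \<sigma> \<tau> y"
    then show "x = y" using sD(2) tD(2) tD(3) comp by (metis inj_onD)
  qed
  have "compose M \<sigma> \<tau> ` M = \<sigma> ` \<tau> ` M"
    by (simp add: comp image_image cong: image_cong)
  then have img: "compose M \<sigma> \<tau> ` M = M" using s(2) t(2) by simp
  show ?thesis
    unfolding daut_def dHom_def
  proof (intro CollectI conjI ballI inj img compose_extensional)
    show "compose M \<sigma> \<tau> ` M \<subseteq> M" using img by simp
    show "compose M \<sigma> \<tau> 1 = 1" using sD(4) tD(4) dsubfieldD(2)[OF M] comp by simp
  next
    fix x y assume "x \<in> M" "y \<in> M"
    then show "compose M \<sigma> \<tau> (x + y) = compose M \<sigma> \<tau> x + compose M \<sigma> \<tau> y"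
      "compose M \<sigma> \<tau> (x * y) = compose M \<sigma> \<tau> x * compose M \<sigma> \<tau> y"
      using sD(5,6) tD(3,5,6) dsubfieldD(3,4)[OF M] comp by simp_all
  next
    fix x assume "x \<in> M"
    then show "compose M \<sigma> \<tau> (D x) = D (compose M \<sigma> \<tau> x)"
      using sD(7) tD(3,7) dsubfieldD(7)[OF M] comp by simp
  next
    fix x assume "x \<in> K"
    then show "compose M \<sigma> \<tau> x = x"
      using sD(1,8) tD(8) unfolding compose_def extensional_def by auto
  qed
qed

lemma restrict_daut:
  assumes \<sigma>: "\<sigma> \<in> daut D K M" and N: "dsubfield D N" "N \<subseteq> M" "\<sigma> ` N = N"
    and K': "K' \<subseteq> K" "K' \<subseteq> N"
  shows "restrict \<sigma> N \<in> daut D K' N"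
proof -
  have s: "\<sigma> \<in> dHom D K M M" using \<sigma> unfolding daut_def by auto
  note sD = dHomD[OF s] and n = dsubfieldD[OF N(1)]
  show ?thesis
    unfolding daut_def dHom_def
  proof (intro CollectI conjI ballI restrict_extensional)
    show "inj_on (restrict \<sigma> N) N" using inj_on_subset[OF sD(2) N(2)] by simp
    show "restrict \<sigma> N ` N = N" "restrict \<sigma> N ` N \<subseteq> N" using N(3) by simp_all
    show "restrict \<sigma> N 1 = 1" using sD(4) n(2) by simp
  next
    fix x y assume "x \<in> N" "y \<in> N"
    then show "restrict \<sigma> N (x + y) = restrict \<sigma> N x + restrict \<sigma> N y"
      "restrict \<sigma> N (x * y) = restrict \<sigma> N x * restrict \<sigma> N y"
      using sD(5,6) n(3,4) subsetD[OF N(2)] by auto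
  next
    fix x assume "x \<in> N"
    then show "restrict \<sigma> N (D x) = D (restrict \<sigma> N x)" using sD(7) n(7) subsetD[OF N(2)] by auto
  next
    fix x assume "x \<in> K'"
    then show "restrict \<sigma> N x = x" using sD(8) K' by auto
  qed
qed

lemma Gal_memD:
  assumes "h \<in> Gal D K L"
  shows "dhom_on D (dgen D (L \<union> consts_of D UNIV)) h"
    "h \<in> extensional (dgen D (L \<union> consts_of D UNIV))"
    "x \<in> dgen D (K \<union> consts_of D UNIV) \<Longrightarrow> h x = x"
  using assms unfolding Gal_def daut_def dHom_def dhom_on_def ring_hom_on_def by auto

lemma Gal_eqI:
  assumes g: "g \<in> Gal D K L" and h: "h \<in> Gal D K L" and eq: "\<forall>x\<in>L. g x = h x"
  shows "g = h"
proof (rule extensionalityI[OF Gal_memD(2)[OF g] Gal_memD(2)[OF h]])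
  let ?C = "consts_of D UNIV"
  have "\<forall>x\<in>L \<union> ?C. g x = h x"
    using eq Gal_memD(3)[OF g] Gal_memD(3)[OF h] dgen_superset[of "K \<union> ?C" D] by auto
  then show "g x = h x" if "x \<in> dgen D (L \<union> ?C)" for x
    using dhom_on_eq_on_dgen[OF dsubfield_dgen Gal_memD(1)[OF g] Gal_memD(1)[OF h]]
      dgen_superset[of "L \<union> ?C" D] that by blast
qed

section \<open>Linear relations over the constants\<close>

lemma sum_eliminate_by_relation:
  fixes \<gamma> a c :: "'b \<Rightarrow> 'a::field"
  assumes "finite I" "k \<in> I" "\<gamma> k \<noteq> 0" "(\<Sum>i\<in>I. \<gamma> i * c i) = 0"
  shows "(\<Sum>i\<in>I. a i * c i) = (\<Sum>i\<in>I-{k}. (a i - a k * (\<gamma> i / \<gamma> k)) * c i)"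
proof -
  have rel: "(\<Sum>i\<in>I-{k}. \<gamma> i * c i) = - (\<gamma> k * c k)"
    using assms(4) sum.remove[OF assms(1,2), of "\<lambda>i. \<gamma> i * c i"]
    by (simp add: eq_neg_iff_add_eq_0 add.commute)
  have "(\<Sum>i\<in>I-{k}. (a i - a k * (\<gamma> i / \<gamma> k)) * c i)
      = (\<Sum>i\<in>I-{k}. a i * c i - (a k / \<gamma> k) * (\<gamma> i * c i))"
    by (rule sum.cong) (use assms(3) in \<open>simp_all add: field_simps\<close>)
  also have "\<dots> = (\<Sum>i\<in>I-{k}. a i * c i) - (a k / \<gamma> k) * (\<Sum>i\<in>I-{k}. \<gamma> i * c i)"
    by (simp add: sum_subtractf sum_distrib_left)
  also have "\<dots> = (\<Sum>i\<in>I-{k}. a i * c i) + a k * c k" using rel assms(3) by simp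
  also have "\<dots> = (\<Sum>i\<in>I. a i * c i)"
    using sum.remove[OF assms(1,2), of "\<lambda>i. a i * c i"] by simp
  finally show ?thesis by simp
qed

locale diff_field =
  fixes D :: "'a::field \<Rightarrow> 'a"
  assumes derivation_D: "derivation D"
begin

lemma deriv_add: "D (x + y) = D x + D y" and deriv_mult: "D (x * y) = D x * y + x * D y"
  using derivation_D unfolding derivation_def by auto

lemma deriv_zero: "D 0 = 0"
proof -
  have "D 0 + D 0 = D 0 + 0" using deriv_add[of 0 0] by simp
  then show ?thesis by (rule add_left_imp_eq)
qed

lemma deriv_one: "D 1 = 0"
proof -
  have "D 1 + D 1 = D 1 + 0" using deriv_mult[of 1 1] by simp
  then show ?thesis by (rule add_left_imp_eq)
qed

lemma deriv_sum: "D (sum f I) = (\<Sum>i\<in>I. D (f i))"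
  by (induction I rule: infinite_finite_induct) (auto simp: deriv_zero deriv_add)

lemma deriv_sum_const_coeffs:
  "\<forall>i\<in>I. D (c i) = 0 \<Longrightarrow> D (\<Sum>i\<in>I. b i * c i) = (\<Sum>i\<in>I. D (b i) * c i)"
  unfolding deriv_sum by (auto intro!: sum.cong simp: deriv_mult)

lemma deriv_inverse: "x \<noteq> 0 \<Longrightarrow> D (inverse x) = - D x * inverse x * inverse x"
proof -
  assume x: "x \<noteq> 0"
  have "0 = D (x * inverse x)" using x deriv_one by simp
  also have "\<dots> = D x * inverse x + x * D (inverse x)" by (rule deriv_mult)
  finally have "x * D (inverse x) = - D x * inverse x" by (simp add: eq_neg_iff_add_eq_0 add.commute)
  then have "inverse x * (x * D (inverse x)) = inverse x * (- D x * inverse x)" by simp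
  then show ?thesis using x by (simp add: field_simps)
qed

lemma deriv_divide: "y \<noteq> 0 \<Longrightarrow> D (x / y) = (y * D x - x * D y) / (y * y)"
proof -
  assume y: "y \<noteq> 0"
  have "D (x / y) = D x * inverse y + x * (- D y * inverse y * inverse y)"
    unfolding divide_inverse deriv_mult deriv_inverse[OF y] ..
  also have "\<dots> = (y * D x - x * D y) / (y * y)" using y by (simp add: field_simps)
  finally show ?thesis .
qed

lemma deriv_divide_consts: "D x = 0 \<Longrightarrow> D y = 0 \<Longrightarrow> D (x / y) = 0"
  by (cases "y = 0") (auto simp: deriv_zero deriv_divide)

text \<open>Normalize a nonzero coefficient to 1 and differentiate: unless all coefficients are
  constant, this gives a shorter nontrivial relation.\<close>

lemma exists_const_relation:
  assumes E: "dsubfield D E" and "finite I" and "\<forall>i\<in>I. u i \<in> E \<and> D (c i) = 0"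
    and "(\<Sum>i\<in>I. u i * c i) = 0" and "\<exists>k\<in>I. u k \<noteq> 0"
  shows "\<exists>\<gamma>. (\<forall>i\<in>I. \<gamma> i \<in> E \<and> D (\<gamma> i) = 0) \<and> (\<exists>k\<in>I. \<gamma> k \<noteq> 0) \<and> (\<Sum>i\<in>I. \<gamma> i * c i) = 0"
  using assms(2-5)
proof (induction I arbitrary: u rule: finite_psubset_induct)
  case (psubset I)
  from psubset.prems obtain k where k: "k \<in> I" "u k \<noteq> 0" by auto
  define v where "v i = u i / u k" for i
  have vE: "\<forall>i\<in>I. v i \<in> E" using psubset.prems k dsubfieldD(9)[OF E] by (auto simp: v_def)
  have "(\<Sum>i\<in>I. v i * c i) = (\<Sum>i\<in>I. u i * c i) / u k"
    by (simp add: v_def sum_divide_distrib)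
  then have rel: "(\<Sum>i\<in>I. v i * c i) = 0" using psubset.prems by simp
  then have deriv_rel: "(\<Sum>i\<in>I. D (v i) * c i) = 0"
    using deriv_sum_const_coeffs[of I c v] psubset.prems deriv_zero by simp
  have vk: "v k = 1" using k by (simp add: v_def)
  show ?case
  proof (cases "\<forall>i\<in>I. D (v i) = 0")
    case True
    moreover have "\<exists>k\<in>I. v k \<noteq> 0" using vk k(1) by (intro bexI[of _ k]) simp_all
    ultimately show ?thesis using vE rel by (intro exI[of _ v]) auto
  next
    case False
    then obtain j where j: "j \<in> I" "D (v j) \<noteq> 0" by auto
    have "D (v k) = 0" using vk deriv_one by simp
    then have "j \<noteq> k" "(\<Sum>i\<in>I-{k}. D (v i) * c i) = 0"
      using j deriv_rel sum.remove[OF psubset.hyps(1) k(1), of "\<lambda>i. D (v i) * c i"] by auto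
    then have "\<exists>\<gamma>. (\<forall>i\<in>I-{k}. \<gamma> i \<in> E \<and> D (\<gamma> i) = 0) \<and> (\<exists>k\<in>I-{k}. \<gamma> k \<noteq> 0)
        \<and> (\<Sum>i\<in>I-{k}. \<gamma> i * c i) = 0"
      using k vE psubset.prems j dsubfieldD(7)[OF E] by (intro psubset.IH) auto
    then obtain \<gamma> where \<gamma>: "\<forall>i\<in>I-{k}. \<gamma> i \<in> E \<and> D (\<gamma> i) = 0" "\<exists>k\<in>I-{k}. \<gamma> k \<noteq> 0"
      "(\<Sum>i\<in>I-{k}. \<gamma> i * c i) = 0" by blast
    have "(\<Sum>i\<in>I. (\<gamma>(k := 0)) i * c i) = (\<Sum>i\<in>I-{k}. \<gamma> i * c i)"
      using sum.remove[OF psubset.hyps(1) k(1), of "\<lambda>i. (\<gamma>(k := 0)) i * c i"] by simp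
    then show ?thesis
      using \<gamma> dsubfieldD(1)[OF E] deriv_zero by (intro exI[of _ "\<gamma>(k := 0)"]) auto
  qed
qed

lemma ring_hom_preserves_const_relation:
  assumes F: "dsubfield D F" and \<phi>: "ring_hom_on F \<phi>" and fix_consts: "\<forall>x\<in>consts_of D F. \<phi> x = x"
    and "finite I" and "\<forall>i\<in>I. a i \<in> F \<and> D (c i) = 0" and "(\<Sum>i\<in>I. a i * c i) = 0"
  shows "(\<Sum>i\<in>I. \<phi> (a i) * c i) = 0"
  using assms(4-6)
proof (induction I arbitrary: a rule: finite_psubset_induct)
  case (psubset I)
  note h = ring_hom_onD[OF F \<phi>]
  show ?case
  proof (cases "\<forall>i\<in>I. a i = 0")
    case True then show ?thesis using h(2) by simp
  next
    case False
    then obtain \<gamma> where \<gamma>: "\<forall>i\<in>I. \<gamma> i \<in> F \<and> D (\<gamma> i) = 0" "\<exists>k\<in>I. \<gamma> k \<noteq> 0" "(\<Sum>i\<in>I. \<gamma> i * c i) = 0"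
      using exists_const_relation[OF F psubset.hyps(1), of a c] psubset.prems by blast
    then obtain k where k: "k \<in> I" "\<gamma> k \<noteq> 0" by blast
    define a' where "a' i = a i - a k * (\<gamma> i / \<gamma> k)" for i
    have q: "\<gamma> i / \<gamma> k \<in> F" "\<phi> (\<gamma> i / \<gamma> k) = \<gamma> i / \<gamma> k" if "i \<in> I" for i
      using \<gamma>(1) that k deriv_divide_consts dsubfieldD(9)[OF F] fix_consts
      unfolding consts_of_def by auto
    have a'F: "\<forall>i\<in>I. a' i \<in> F"
      unfolding a'_def using psubset.prems q k dsubfieldD(4,8)[OF F] by blast
    have "(\<Sum>i\<in>I-{k}. a' i * c i) = 0"
      using sum_eliminate_by_relation[OF psubset.hyps(1) k \<gamma>(3), of a] psubset.prems
      by (simp add: a'_def)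
    then have rel': "(\<Sum>i\<in>I-{k}. \<phi> (a' i) * c i) = 0"
      using psubset.IH[of "I-{k}" a'] k a'F psubset.prems by auto
    have \<phi>a': "\<phi> (a' i) = \<phi> (a i) - \<phi> (a k) * (\<gamma> i / \<gamma> k)" if "i \<in> I" for i
    proof -
      have ai: "a i \<in> F" and ak: "a k \<in> F" using psubset.prems that k by auto
      show ?thesis
        unfolding a'_def h(6)[OF ai dsubfieldD(4)[OF F ak q(1)[OF that]]]
          h(4)[OF ak q(1)[OF that]] q(2)[OF that] by (rule refl)
    qed
    have "(\<Sum>i\<in>I. \<phi> (a i) * c i)
        = (\<Sum>i\<in>I-{k}. (\<phi> (a i) - \<phi> (a k) * (\<gamma> i / \<gamma> k)) * c i)"
      by (rule sum_eliminate_by_relation[OF psubset.hyps(1) k \<gamma>(3)])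
    also have "\<dots> = (\<Sum>i\<in>I-{k}. \<phi> (a' i) * c i)" using \<phi>a' by (intro sum.cong) auto
    finally show ?thesis using rel' by simp
  qed
qed

lemma const_quotient_mem:
  assumes U: "dsubfield D U" and F: "dsubfield D F" "F \<subseteq> U" "consts_of D U \<subseteq> F" and x: "x \<in> U"
    and "finite I" and "\<forall>i\<in>I. a i \<in> F \<and> b i \<in> F \<and> D (c i) = 0"
    and "(\<Sum>i\<in>I. a i * c i) \<noteq> 0" and "x * (\<Sum>i\<in>I. a i * c i) = (\<Sum>i\<in>I. b i * c i)"
  shows "x \<in> F"
  using assms(6-9)
proof (induction I arbitrary: a b rule: finite_psubset_induct)
  case (psubset I)
  define u where "u i = x * a i - b i" for i
  have uU: "\<forall>i\<in>I. u i \<in> U" unfolding u_def using psubset.prems F x dsubfieldD(4,8)[OF U] by blast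
  have "(\<Sum>i\<in>I. u i * c i) = (\<Sum>i\<in>I. x * (a i * c i) - b i * c i)"
    by (rule sum.cong) (simp_all add: u_def algebra_simps)
  also have "\<dots> = x * (\<Sum>i\<in>I. a i * c i) - (\<Sum>i\<in>I. b i * c i)"
    by (simp only: sum_subtractf sum_distrib_left)
  finally have rel: "(\<Sum>i\<in>I. u i * c i) = 0" using psubset.prems(3) by simp
  show ?case
  proof (cases "\<forall>i\<in>I. u i = 0")
    case True
    obtain k where "k \<in> I" "a k * c k \<noteq> 0"
      using sum.not_neutral_contains_not_neutral[OF psubset.prems(2)] by blast
    then have "x = b k / a k" "k \<in> I" using True by (auto simp: u_def field_simps)
    then show ?thesis using psubset.prems dsubfieldD(9)[OF F(1)] by auto
  next
    case False
    then obtain \<gamma> where \<gamma>: "\<forall>i\<in>I. \<gamma> i \<in> U \<and> D (\<gamma> i) = 0" "\<exists>k\<in>I. \<gamma> k \<noteq> 0" "(\<Sum>i\<in>I. \<gamma> i * c i) = 0"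
      using exists_const_relation[OF U psubset.hyps(1), of u c] psubset.prems uU rel by blast
    then obtain k where k: "k \<in> I" "\<gamma> k \<noteq> 0" by blast
    have \<gamma>F: "\<gamma> i \<in> F" if "i \<in> I" for i
      using \<gamma>(1) that F(3) unfolding consts_of_def by blast
    define a' where "a' i = a i - a k * (\<gamma> i / \<gamma> k)" for i
    define b' where "b' i = b i - b k * (\<gamma> i / \<gamma> k)" for i
    have "\<forall>i\<in>I-{k}. a' i \<in> F \<and> b' i \<in> F \<and> D (c i) = 0"
    proof
      fix i assume i: "i \<in> I-{k}"
      then have "a i \<in> F" "b i \<in> F" "a k \<in> F" "b k \<in> F" "\<gamma> i \<in> F" "\<gamma> k \<in> F" "D (c i) = 0"
        using psubset.prems(1) k \<gamma>F by auto
      then show "a' i \<in> F \<and> b' i \<in> F \<and> D (c i) = 0"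
        unfolding a'_def b'_def by (simp add: dsubfieldD(4,8,9)[OF F(1)])
    qed
    moreover have "(\<Sum>i\<in>I. a i * c i) = (\<Sum>i\<in>I-{k}. a' i * c i)"
      "(\<Sum>i\<in>I. b i * c i) = (\<Sum>i\<in>I-{k}. b' i * c i)"
      unfolding a'_def b'_def by (rule sum_eliminate_by_relation[OF psubset.hyps(1) k \<gamma>(3)])+
    ultimately show ?thesis
      using k psubset.prems(2,3) by (intro psubset.IH[of "I-{k}" a' b']) auto
  qed
qed

end

section \<open>Fractions over the constants\<close>

text \<open>Natural-number indices let the product of two representations be indexed by
  prod_encode.\<close>

definition pair_index :: "nat set \<Rightarrow> nat set \<Rightarrow> nat set" where
  "pair_index I J = prod_encode ` (I \<times> J)"

definition pair_prod :: "(nat \<Rightarrow> 'a::times) \<Rightarrow> (nat \<Rightarrow> 'a) \<Rightarrow> nat \<Rightarrow> 'a" where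
  "pair_prod f g n = f (fst (prod_decode n)) * g (snd (prod_decode n))"

lemma pair_index_memD: "n \<in> pair_index I J \<Longrightarrow> fst (prod_decode n) \<in> I \<and> snd (prod_decode n) \<in> J"
  unfolding pair_index_def by auto

lemma finite_pair_index: "finite I \<Longrightarrow> finite J \<Longrightarrow> finite (pair_index I J)"
  unfolding pair_index_def by auto

lemma sum_pair_index:
  fixes p q c c' :: "nat \<Rightarrow> 'a::comm_ring_1"
  assumes "finite I" "finite J"
  shows "(\<Sum>n\<in>pair_index I J. pair_prod p q n * pair_prod c c' n)
    = (\<Sum>i\<in>I. p i * c i) * (\<Sum>j\<in>J. q j * c' j)"
proof -
  have "(\<Sum>n\<in>pair_index I J. pair_prod p q n * pair_prod c c' n)
      = (\<Sum>(i, j)\<in>I \<times> J. (p i * c i) * (q j * c' j))"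
    unfolding pair_index_def
    by (subst sum.reindex) (auto simp: inj_prod_encode pair_prod_def mult_ac intro!: sum.cong)
  also have "\<dots> = (\<Sum>i\<in>I. p i * c i) * (\<Sum>j\<in>J. q j * c' j)"
    by (simp add: sum_product sum.cartesian_product)
  finally show ?thesis .
qed

lemma pair_prod_mem:
  assumes "dsubfield D F" "\<forall>i\<in>I. p i \<in> F" "\<forall>j\<in>J. q j \<in> F" "n \<in> pair_index I J"
  shows "pair_prod p q n \<in> F"
  using assms pair_index_memD dsubfieldD(4)[OF assms(1)] unfolding pair_prod_def by blast

definition frac_rep ::
  "('a::field \<Rightarrow> 'a) \<Rightarrow> 'a set \<Rightarrow> 'a \<Rightarrow> nat set \<Rightarrow> (nat \<Rightarrow> 'a) \<Rightarrow> (nat \<Rightarrow> 'a) \<Rightarrow> (nat \<Rightarrow> 'a) \<Rightarrow> bool"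
where
  "frac_rep D F x I a b c \<longleftrightarrow> finite I \<and> (\<forall>i\<in>I. a i \<in> F \<and> b i \<in> F \<and> D (c i) = 0) \<and>
     (\<Sum>i\<in>I. a i * c i) \<noteq> 0 \<and> x * (\<Sum>i\<in>I. a i * c i) = (\<Sum>i\<in>I. b i * c i)"

lemma frac_repI:
  assumes "finite I" "\<And>i. i \<in> I \<Longrightarrow> a i \<in> F" "\<And>i. i \<in> I \<Longrightarrow> b i \<in> F"
    "\<And>i. i \<in> I \<Longrightarrow> D (c i) = 0" "(\<Sum>i\<in>I. a i * c i) \<noteq> 0"
    "x * (\<Sum>i\<in>I. a i * c i) = (\<Sum>i\<in>I. b i * c i)"
  shows "frac_rep D F x I a b c"
  using assms unfolding frac_rep_def by blast

lemma frac_repD: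
  assumes "frac_rep D F x I a b c"
  shows "finite I" "\<forall>i\<in>I. a i \<in> F" "\<forall>i\<in>I. b i \<in> F" "\<forall>i\<in>I. D (c i) = 0"
    "(\<Sum>i\<in>I. a i * c i) \<noteq> 0" "x * (\<Sum>i\<in>I. a i * c i) = (\<Sum>i\<in>I. b i * c i)"
  using assms unfolding frac_rep_def by auto

context diff_field
begin

lemma deriv_pair_prod_consts:
  "\<forall>i\<in>I. D (c i) = 0 \<Longrightarrow> \<forall>j\<in>J. D (c' j) = 0 \<Longrightarrow> n \<in> pair_index I J \<Longrightarrow> D (pair_prod c c' n) = 0"
  using pair_index_memD unfolding pair_prod_def by (auto simp: deriv_mult)

context
  fixes F assumes F: "dsubfield D F"
begin

lemma frac_rep_of_mem: "x \<in> F \<Longrightarrow> frac_rep D F x {0} (\<lambda>_. 1) (\<lambda>_. x) (\<lambda>_. 1)"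
  using dsubfieldD(2)[OF F] deriv_one unfolding frac_rep_def by auto

lemma frac_rep_of_const:
  "D x = 0 \<Longrightarrow> frac_rep D F x {0, 1} (\<lambda>i. if i = 0 then 1 else 0) (\<lambda>i. if i = 0 then 0 else 1)
     (\<lambda>i. if i = 0 then 1 else x)"
  using dsubfieldD(1,2)[OF F] deriv_one unfolding frac_rep_def by auto

lemma frac_rep_mult:
  assumes r: "frac_rep D F x I a b c" and r': "frac_rep D F y J a' b' c'"
  shows "frac_rep D F (x * y) (pair_index I J) (pair_prod a a') (pair_prod b b') (pair_prod c c')"
proof -
  note r = frac_repD[OF r] and r' = frac_repD[OF r']
  note f = r(1) r'(1)
  show ?thesis
  proof (rule frac_repI, unfold sum_pair_index[OF f])
    show "(\<Sum>i\<in>I. a i * c i) * (\<Sum>j\<in>J. a' j * c' j) \<noteq> 0" using r(5) r'(5) by simp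
    have "x * y * ((\<Sum>i\<in>I. a i * c i) * (\<Sum>j\<in>J. a' j * c' j))
        = (x * (\<Sum>i\<in>I. a i * c i)) * (y * (\<Sum>j\<in>J. a' j * c' j))" by (simp add: ac_simps)
    then show "x * y * ((\<Sum>i\<in>I. a i * c i) * (\<Sum>j\<in>J. a' j * c' j))
        = (\<Sum>i\<in>I. b i * c i) * (\<Sum>j\<in>J. b' j * c' j)" unfolding r(6) r'(6) .
  qed (use finite_pair_index[OF f] pair_prod_mem[OF F r(2) r'(2)] pair_prod_mem[OF F r(3) r'(3)]
      deriv_pair_prod_consts[OF r(4) r'(4)] in auto)
qed

lemma frac_rep_add:
  assumes r: "frac_rep D F x I a b c" and r': "frac_rep D F y J a' b' c'"
  shows "frac_rep D F (x + y) (pair_index I J) (pair_prod a a')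
     (\<lambda>n. pair_prod b a' n + pair_prod a b' n) (pair_prod c c')"
proof -
  note r = frac_repD[OF r] and r' = frac_repD[OF r']
  note f = r(1) r'(1)
  have sum: "(\<Sum>n\<in>pair_index I J. (pair_prod b a' n + pair_prod a b' n) * pair_prod c c' n)
      = (\<Sum>i\<in>I. b i * c i) * (\<Sum>j\<in>J. a' j * c' j) + (\<Sum>i\<in>I. a i * c i) * (\<Sum>j\<in>J. b' j * c' j)"
    by (simp add: distrib_right sum.distrib sum_pair_index[OF f])
  show ?thesis
  proof (rule frac_repI, unfold sum sum_pair_index[OF f])
    show "(\<Sum>i\<in>I. a i * c i) * (\<Sum>j\<in>J. a' j * c' j) \<noteq> 0" using r(5) r'(5) by simp
    have "(x + y) * ((\<Sum>i\<in>I. a i * c i) * (\<Sum>j\<in>J. a' j * c' j))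
        = (x * (\<Sum>i\<in>I. a i * c i)) * (\<Sum>j\<in>J. a' j * c' j)
          + (\<Sum>i\<in>I. a i * c i) * (y * (\<Sum>j\<in>J. a' j * c' j))" by (simp add: algebra_simps)
    then show "(x + y) * ((\<Sum>i\<in>I. a i * c i) * (\<Sum>j\<in>J. a' j * c' j))
        = (\<Sum>i\<in>I. b i * c i) * (\<Sum>j\<in>J. a' j * c' j) + (\<Sum>i\<in>I. a i * c i) * (\<Sum>j\<in>J. b' j * c' j)"
      unfolding r(6) r'(6) .
    show "pair_prod b a' n + pair_prod a b' n \<in> F" if "n \<in> pair_index I J" for n
      using pair_prod_mem[OF F r(3) r'(2) that] pair_prod_mem[OF F r(2) r'(3) that]
      by (rule dsubfieldD(3)[OF F])
  qed (use finite_pair_index[OF f] pair_prod_mem[OF F r(2) r'(2)]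
      deriv_pair_prod_consts[OF r(4) r'(4)] in auto)
qed

lemma frac_rep_uminus: "frac_rep D F x I a b c \<Longrightarrow> frac_rep D F (- x) I a (\<lambda>i. - b i) c"
  using dsubfieldD(5)[OF F] unfolding frac_rep_def by (auto simp: sum_negf)

lemma frac_rep_inverse:
  assumes r: "frac_rep D F x I a b c" and "x \<noteq> 0"
  shows "frac_rep D F (inverse x) I b a c"
proof -
  from r have "(\<Sum>i\<in>I. a i * c i) \<noteq> 0" and eq: "(\<Sum>i\<in>I. b i * c i) = x * (\<Sum>i\<in>I. a i * c i)"
    unfolding frac_rep_def by auto
  with \<open>x \<noteq> 0\<close> have "(\<Sum>i\<in>I. b i * c i) \<noteq> 0"
    "inverse x * (\<Sum>i\<in>I. b i * c i) = (\<Sum>i\<in>I. a i * c i)"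
    unfolding eq by simp_all
  then show ?thesis using r unfolding frac_rep_def by auto
qed

lemma frac_rep_deriv:
  assumes r: "frac_rep D F x I a b c"
  shows "frac_rep D F (D x) (pair_index I I) (pair_prod a a)
     (\<lambda>n. pair_prod a (\<lambda>i. D (b i)) n - pair_prod b (\<lambda>i. D (a i)) n) (pair_prod c c)"
proof -
  note r = frac_repD[OF r]
  define A where "A = (\<Sum>i\<in>I. a i * c i)"
  define B where "B = (\<Sum>i\<in>I. b i * c i)"
  have Da: "\<forall>i\<in>I. D (a i) \<in> F" and Db: "\<forall>i\<in>I. D (b i) \<in> F"
    using r(2,3) dsubfieldD(7)[OF F] by auto
  have sum: "(\<Sum>n\<in>pair_index I I. (pair_prod a (\<lambda>i. D (b i)) n - pair_prod b (\<lambda>i. D (a i)) n)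
      * pair_prod c c n) = A * D B - B * D A"
    unfolding A_def B_def deriv_sum_const_coeffs[OF r(4)]
    by (simp add: left_diff_distrib sum_subtractf sum_pair_index[OF r(1) r(1)])
  show ?thesis
  proof (rule frac_repI, unfold sum sum_pair_index[OF r(1) r(1)] A_def[symmetric])
    show "A * A \<noteq> 0" using r(5) unfolding A_def by simp
    show "D x * (A * A) = A * D B - B * D A"
      using deriv_mult[of x A] r(6) unfolding A_def[symmetric] B_def[symmetric]
      by (simp add: algebra_simps)
    show "pair_prod a (\<lambda>i. D (b i)) n - pair_prod b (\<lambda>i. D (a i)) n \<in> F"
      if "n \<in> pair_index I I" for n
      using pair_prod_mem[OF F r(2) Db that] pair_prod_mem[OF F r(3) Da that]
      by (rule dsubfieldD(8)[OF F])
  qed (use finite_pair_index[OF r(1) r(1)] pair_prod_mem[OF F r(2) r(2)]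
      deriv_pair_prod_consts[OF r(4) r(4)] in auto)
qed

lemma frac_rep_mem:
  assumes G: "dsubfield D G" "F \<subseteq> G" "consts_of D UNIV \<subseteq> G" and r: "frac_rep D F x I a b c"
  shows "x \<in> G"
proof -
  have "c i \<in> G" if "i \<in> I" for i using r G(3) that unfolding frac_rep_def consts_of_def by auto
  then have "(\<Sum>i\<in>I. a i * c i) \<in> G" "(\<Sum>i\<in>I. b i * c i) \<in> G"
    using r G(2) unfolding frac_rep_def by (auto intro!: dsubfield_sum[OF G(1)] dsubfieldD(4)[OF G(1)])
  moreover have "x = (\<Sum>i\<in>I. b i * c i) / (\<Sum>i\<in>I. a i * c i)"
    using r unfolding frac_rep_def by (simp add: field_simps)
  ultimately show ?thesis using dsubfieldD(9)[OF G(1)] by simp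
qed

lemma dgen_consts_iff_frac_rep:
  "x \<in> dgen D (F \<union> consts_of D UNIV) \<longleftrightarrow> (\<exists>I a b c. frac_rep D F x I a b c)"
proof
  assume "\<exists>I a b c. frac_rep D F x I a b c"
  then show "x \<in> dgen D (F \<union> consts_of D UNIV)" using frac_rep_mem unfolding dgen_def by blast
next
  define R where "R = {x. \<exists>I a b c. frac_rep D F x I a b c}"
  have FR: "F \<subseteq> R" using frac_rep_of_mem unfolding R_def by blast
  have CR: "consts_of D UNIV \<subseteq> R" using frac_rep_of_const unfolding R_def consts_of_def by blast
  have "dsubfield D R"
    unfolding dsubfield_def
  proof (intro conjI ballI)
    show "0 \<in> R" "1 \<in> R" using FR dsubfieldD(1,2)[OF F] by auto
  next
    fix x y assume "x \<in> R" "y \<in> R"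
    then obtain I a b c J a' b' c' where r: "frac_rep D F x I a b c" "frac_rep D F y J a' b' c'"
      unfolding R_def by blast
    show "x + y \<in> R" unfolding R_def using frac_rep_add[OF r] by blast
    show "x * y \<in> R" unfolding R_def using frac_rep_mult[OF r] by blast
  next
    fix x assume "x \<in> R"
    then obtain I a b c where r: "frac_rep D F x I a b c" unfolding R_def by blast
    show "- x \<in> R" unfolding R_def using frac_rep_uminus[OF r] by blast
    show "D x \<in> R" unfolding R_def using frac_rep_deriv[OF r] by blast
    show "inverse x \<in> R"
      using frac_rep_inverse[OF r] FR dsubfieldD(1)[OF F] unfolding R_def by (cases "x = 0") auto
  qed
  then have "dgen D (F \<union> consts_of D UNIV) \<subseteq> R" using FR CR by (intro dgen_least) auto
  then show "x \<in> dgen D (F \<union> consts_of D UNIV) \<Longrightarrow> \<exists>I a b c. frac_rep D F x I a b c"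
    unfolding R_def by blast
qed

end

lemma dgen_consts_of_subset:
  assumes U: "dsubfield D U" and F: "dsubfield D F" "F \<subseteq> U"
  shows "dgen D (F \<union> consts_of D UNIV) \<inter> U \<subseteq> dgen D (F \<union> consts_of D U)"
proof
  let ?F' = "dgen D (F \<union> consts_of D U)"
  fix x assume "x \<in> dgen D (F \<union> consts_of D UNIV) \<inter> U"
  then obtain I a b c where r: "frac_rep D F x I a b c" and x: "x \<in> U"
    using dgen_consts_iff_frac_rep[OF F(1)] by blast
  note R = frac_repD[OF r]
  have F'U: "?F' \<subseteq> U" using F(2) U by (intro dgen_least) (auto simp: consts_of_def)
  have FF': "F \<subseteq> ?F'" and CF': "consts_of D U \<subseteq> ?F'"
    using dgen_superset[of "F \<union> consts_of D U" D] by auto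
  have "\<forall>i\<in>I. a i \<in> ?F' \<and> b i \<in> ?F' \<and> D (c i) = 0" using R(2-4) FF' by blast
  then show "x \<in> ?F'" by (rule const_quotient_mem[OF U dsubfield_dgen F'U CF' x R(1) _ R(5,6)])
qed

lemma dgen_consts_of_eq:
  assumes U: "dsubfield D U" and F: "dsubfield D F" "F \<subseteq> U" and F': "dsubfield D F'" "F' \<subseteq> U"
    and eq: "dgen D (F \<union> consts_of D UNIV) = dgen D (F' \<union> consts_of D UNIV)"
  shows "dgen D (F \<union> consts_of D U) = dgen D (F' \<union> consts_of D U)"
proof -
  have mono: "dgen D (G' \<union> consts_of D U) \<subseteq> dgen D (G \<union> consts_of D U)"
    if G: "dsubfield D G" "G \<subseteq> U" and G': "G' \<subseteq> U" "G' \<subseteq> dgen D (G \<union> consts_of D UNIV)" for G G'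
  proof (rule dgen_least[OF dsubfield_dgen])
    show "G' \<union> consts_of D U \<subseteq> dgen D (G \<union> consts_of D U)"
      using dgen_consts_of_subset[OF U G] G' dgen_superset[of "G \<union> consts_of D U" D] by blast
  qed
  have "F \<subseteq> dgen D (F' \<union> consts_of D UNIV)" "F' \<subseteq> dgen D (F \<union> consts_of D UNIV)"
    using eq dgen_superset[of "F \<union> consts_of D UNIV" D] dgen_superset[of "F' \<union> consts_of D UNIV" D]
    by auto
  then show ?thesis using mono[OF F' F(2)] mono[OF F F'(2)] by (intro subset_antisym) auto
qed

end

section \<open>Extension of strong embeddings\<close>

lemma dhom_on_inv_into:
  assumes M: "dsubfield D M" and f: "dhom_on D M f" and inj: "inj_on f M"
  shows "dhom_on D (f ` M) (inv_into M f)"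
proof -
  have r: "ring_hom_on M f" and d: "\<And>x. x \<in> M \<Longrightarrow> f (D x) = D (f x)"
    using f unfolding dhom_on_def by auto
  note h = ring_hom_onD[OF M r] and m = dsubfieldD[OF M]
  have inv: "inv_into M f (f x) = x" if "x \<in> M" for x using inj that by (simp add: inv_into_f_f)
  show ?thesis
    unfolding dhom_on_def ring_hom_on_def
  proof (intro conjI ballI)
    show "inv_into M f 1 = 1" using inv[OF m(2)] h(1) by simp
  next
    fix x y assume "x \<in> f ` M" "y \<in> f ` M"
    then obtain x0 y0 where x0: "x0 \<in> M" and y0: "y0 \<in> M" and xy: "x = f x0" "y = f y0" by auto
    show "inv_into M f (x + y) = inv_into M f x + inv_into M f y"
      unfolding xy h(3)[OF x0 y0, symmetric] inv[OF m(3)[OF x0 y0]] inv[OF x0] inv[OF y0] ..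
    show "inv_into M f (x * y) = inv_into M f x * inv_into M f y"
      unfolding xy h(4)[OF x0 y0, symmetric] inv[OF m(4)[OF x0 y0]] inv[OF x0] inv[OF y0] ..
  next
    fix x assume "x \<in> f ` M"
    then obtain x0 where x0: "x0 \<in> M" and x: "x = f x0" by auto
    show "inv_into M f (D x) = D (inv_into M f x)"
      unfolding x d[OF x0, symmetric] inv[OF m(7)[OF x0]] inv[OF x0] ..
  qed
qed

text \<open>The choice of representation is irrelevant by frac_rep_image_consistent.\<close>

definition const_ext :: "('a::field \<Rightarrow> 'a) \<Rightarrow> 'a set \<Rightarrow> ('a \<Rightarrow> 'a) \<Rightarrow> 'a \<Rightarrow> 'a" where
  "const_ext D L \<tau> = restrict (\<lambda>x. SOME y. \<exists>I a b c. frac_rep D L x I a b c \<and>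
       (\<Sum>i\<in>I. \<tau> (a i) * c i) \<noteq> 0 \<and> y * (\<Sum>i\<in>I. \<tau> (a i) * c i) = (\<Sum>i\<in>I. \<tau> (b i) * c i))
     (dgen D (L \<union> consts_of D UNIV))"

locale strong_dHom = diff_field D for D :: "'a::field \<Rightarrow> 'a" +
  fixes K L \<tau>
  assumes L: "dsubfield D L" and KL: "K \<subseteq> L"
    and \<tau>: "\<tau> \<in> dHom D K L UNIV" and strong: "strong D L \<tau>"
begin

abbreviation "C \<equiv> consts_of D UNIV"
abbreviation "M \<equiv> dgen D (L \<union> C)"
abbreviation "\<tau>' \<equiv> const_ext D L \<tau>"

lemma tau_dhom: "dhom_on D L \<tau>"
  by (rule dHom_dhom_on[OF \<tau>])

lemmas tau = dHomD[OF \<tau>]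
  and tau_ring = ring_hom_onD[OF L tau_dhom[unfolded dhom_on_def, THEN conjunct1]]

lemma tau_fixes_consts: "x \<in> L \<Longrightarrow> D x = 0 \<Longrightarrow> \<tau> x = x"
  using strong unfolding strong_def consts_of_def by auto

lemma M_eq: "M = dgen D (\<tau> ` L \<union> C)"
  using strong unfolding strong_def by auto

lemma dsubfield_tau_image: "dsubfield D (\<tau> ` L)"
  by (rule dsubfield_image[OF L tau_dhom])

lemma L_subset_M: "L \<subseteq> M" and consts_subset_M: "C \<subseteq> M"
  using dgen_superset[of "L \<union> C" D] by auto

lemma tau_preserves_const_relation:
  assumes "finite I" "\<forall>i\<in>I. a i \<in> L \<and> D (c i) = 0" "(\<Sum>i\<in>I. a i * c i) = 0"
  shows "(\<Sum>i\<in>I. \<tau> (a i) * c i) = 0"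
  using ring_hom_preserves_const_relation[OF L _ _ assms] tau_dhom tau_fixes_consts
  unfolding dhom_on_def consts_of_def by blast

lemma tau_reflects_const_relation:
  assumes I: "finite I" "\<forall>i\<in>I. a i \<in> L \<and> D (c i) = 0" and rel: "(\<Sum>i\<in>I. \<tau> (a i) * c i) = 0"
  shows "(\<Sum>i\<in>I. a i * c i) = 0"
proof -
  let ?\<phi> = "inv_into L \<tau>"
  have inv: "?\<phi> (\<tau> x) = x" if "x \<in> L" for x using tau(2) that by (simp add: inv_into_f_f)
  have \<phi>: "dhom_on D (\<tau> ` L) ?\<phi>" by (rule dhom_on_inv_into[OF L tau_dhom tau(2)])
  have "?\<phi> x = x" if "x \<in> consts_of D (\<tau> ` L)" for x
  proof -
    from that obtain x0 where x0: "x0 \<in> L" "x = \<tau> x0" "D (\<tau> x0) = 0" unfolding consts_of_def by auto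
    then have "\<tau> (D x0) = \<tau> 0" using tau(7) tau_ring(2) by simp
    then have "D x0 = 0" using tau(2) x0(1) dsubfieldD(1,7)[OF L] by (meson inj_onD)
    then have "\<tau> x0 = x0" using tau_fixes_consts x0(1) by blast
    then show ?thesis using x0(2) inv[OF x0(1)] by simp
  qed
  then have "(\<Sum>i\<in>I. ?\<phi> (\<tau> (a i)) * c i) = 0"
    using ring_hom_preserves_const_relation[OF dsubfield_tau_image _ _ I(1) _ rel] \<phi> I(2)
    unfolding dhom_on_def by auto
  then show ?thesis using I(2) inv by simp
qed

lemma tau_denominator_nonzero:
  assumes "frac_rep D L x I a b c"
  shows "(\<Sum>i\<in>I. \<tau> (a i) * c i) \<noteq> 0"
proof
  note r = frac_repD[OF assms]
  assume "(\<Sum>i\<in>I. \<tau> (a i) * c i) = 0"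
  then have "(\<Sum>i\<in>I. a i * c i) = 0"
    using tau_reflects_const_relation[OF r(1), of a c] r(2,4) by simp
  with r(5) show False ..
qed

lemma tau_pair_prod:
  assumes "n \<in> pair_index I J" "\<forall>i\<in>I. p i \<in> L" "\<forall>j\<in>J. q j \<in> L"
  shows "\<tau> (pair_prod p q n) = pair_prod (\<lambda>i. \<tau> (p i)) (\<lambda>j. \<tau> (q j)) n"
proof -
  have "p (fst (prod_decode n)) \<in> L" "q (snd (prod_decode n)) \<in> L"
    using pair_index_memD[OF assms(1)] assms(2,3) by auto
  then show ?thesis unfolding pair_prod_def by (rule tau(6))
qed

lemma tau_sum_pair_index:
  assumes "finite I" "finite J" "\<forall>i\<in>I. p i \<in> L" "\<forall>j\<in>J. q j \<in> L"
  shows "(\<Sum>n\<in>pair_index I J. \<tau> (pair_prod p q n) * pair_prod c c' n)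
    = (\<Sum>i\<in>I. \<tau> (p i) * c i) * (\<Sum>j\<in>J. \<tau> (q j) * c' j)"
proof -
  have "(\<Sum>n\<in>pair_index I J. \<tau> (pair_prod p q n) * pair_prod c c' n)
      = (\<Sum>n\<in>pair_index I J. pair_prod (\<lambda>i. \<tau> (p i)) (\<lambda>j. \<tau> (q j)) n * pair_prod c c' n)"
    by (intro sum.cong refl) (simp add: tau_pair_prod[OF _ assms(3,4)])
  then show ?thesis unfolding sum_pair_index[OF assms(1,2)] .
qed

lemma frac_rep_image_consistent:
  assumes r: "frac_rep D L x I a b c" and r': "frac_rep D L x J a' b' c'"
  shows "(\<Sum>i\<in>I. \<tau> (b i) * c i) * (\<Sum>j\<in>J. \<tau> (a' j) * c' j)
       = (\<Sum>i\<in>I. \<tau> (a i) * c i) * (\<Sum>j\<in>J. \<tau> (b' j) * c' j)"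
proof -
  note r = frac_repD[OF r] and r' = frac_repD[OF r']
  note f = r(1) r'(1)
  define e where "e n = pair_prod b a' n - pair_prod a b' n" for n
  have eL: "\<forall>n\<in>pair_index I J. e n \<in> L \<and> D (pair_prod c c' n) = 0"
    unfolding e_def using pair_prod_mem[OF L r(3) r'(2)] pair_prod_mem[OF L r(2) r'(3)]
      dsubfieldD(8)[OF L] deriv_pair_prod_consts[OF r(4) r'(4)] by blast
  have "(\<Sum>n\<in>pair_index I J. e n * pair_prod c c' n) =
      (\<Sum>i\<in>I. b i * c i) * (\<Sum>j\<in>J. a' j * c' j) - (\<Sum>i\<in>I. a i * c i) * (\<Sum>j\<in>J. b' j * c' j)"
    unfolding e_def by (simp add: left_diff_distrib sum_subtractf sum_pair_index[OF f])
  also have "\<dots> = 0"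
    unfolding r(6)[symmetric] r'(6)[symmetric] by (simp add: ac_simps)
  finally have "(\<Sum>n\<in>pair_index I J. \<tau> (e n) * pair_prod c c' n) = 0"
    using tau_preserves_const_relation[OF finite_pair_index[OF f] eL] by blast
  moreover have "\<tau> (e n) = \<tau> (pair_prod b a' n) - \<tau> (pair_prod a b' n)" if "n \<in> pair_index I J" for n
    unfolding e_def
    by (rule tau_ring(6)[OF pair_prod_mem[OF L r(3) r'(2) that] pair_prod_mem[OF L r(2) r'(3) that]])
  then have "(\<Sum>n\<in>pair_index I J. \<tau> (e n) * pair_prod c c' n)
      = (\<Sum>n\<in>pair_index I J. \<tau> (pair_prod b a' n) * pair_prod c c' n)
        - (\<Sum>n\<in>pair_index I J. \<tau> (pair_prod a b' n) * pair_prod c c' n)"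
    by (simp add: left_diff_distrib sum_subtractf[symmetric] cong: sum.cong)
  ultimately show ?thesis
    unfolding tau_sum_pair_index[OF f r(3) r'(2)] tau_sum_pair_index[OF f r(2) r'(3)] by simp
qed

lemma const_ext_frac_rep:
  assumes r: "frac_rep D L x I a b c"
  shows "\<tau>' x = (\<Sum>i\<in>I. \<tau> (b i) * c i) / (\<Sum>i\<in>I. \<tau> (a i) * c i)"
proof -
  have xM: "x \<in> M" using r dgen_consts_iff_frac_rep[OF L] by blast
  let ?P = "\<lambda>y. \<exists>I a b c. frac_rep D L x I a b c \<and>
       (\<Sum>i\<in>I. \<tau> (a i) * c i) \<noteq> 0 \<and> y * (\<Sum>i\<in>I. \<tau> (a i) * c i) = (\<Sum>i\<in>I. \<tau> (b i) * c i)"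
  have "(\<Sum>i\<in>I. \<tau> (b i) * c i) / (\<Sum>i\<in>I. \<tau> (a i) * c i) * (\<Sum>i\<in>I. \<tau> (a i) * c i)
      = (\<Sum>i\<in>I. \<tau> (b i) * c i)"
    using tau_denominator_nonzero[OF r] by simp
  then have "?P ((\<Sum>i\<in>I. \<tau> (b i) * c i) / (\<Sum>i\<in>I. \<tau> (a i) * c i))"
    using r tau_denominator_nonzero[OF r] by blast
  then have "?P (SOME y. ?P y)" by (rule someI[of ?P])
  then obtain J a' b' c' where r': "frac_rep D L x J a' b' c'"
    and n': "(\<Sum>i\<in>J. \<tau> (a' i) * c' i) \<noteq> 0"
    and e': "(SOME y. ?P y) * (\<Sum>i\<in>J. \<tau> (a' i) * c' i) = (\<Sum>i\<in>J. \<tau> (b' i) * c' i)" by blast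
  have "\<tau>' x = (SOME y. ?P y)" using xM unfolding const_ext_def by simp
  also have "\<dots> = (\<Sum>i\<in>J. \<tau> (b' i) * c' i) / (\<Sum>i\<in>J. \<tau> (a' i) * c' i)"
    using e' n' by (simp add: eq_divide_eq)
  also have "\<dots> = (\<Sum>i\<in>I. \<tau> (b i) * c i) / (\<Sum>i\<in>I. \<tau> (a i) * c i)"
    using frac_rep_image_consistent[OF r r'] n' tau_denominator_nonzero[OF r]
    by (simp add: frac_eq_eq ac_simps)
  finally show ?thesis .
qed

lemma obtain_frac_rep:
  assumes "x \<in> M" obtains I a b c where "frac_rep D L x I a b c"
  using assms dgen_consts_iff_frac_rep[OF L] by blast

lemma const_ext_on_L: "x \<in> L \<Longrightarrow> \<tau>' x = \<tau> x"
  using const_ext_frac_rep[OF frac_rep_of_mem[OF L]] tau_ring(1) by simp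

lemma const_ext_on_consts: "x \<in> C \<Longrightarrow> \<tau>' x = x"
  using const_ext_frac_rep[OF frac_rep_of_const[OF L]] tau_ring(1,2) unfolding consts_of_def by simp

lemma tau_sum_deriv:
  assumes "\<forall>i\<in>I. a i \<in> L" "\<forall>i\<in>I. D (c i) = 0"
  shows "D (\<Sum>i\<in>I. \<tau> (a i) * c i) = (\<Sum>i\<in>I. \<tau> (D (a i)) * c i)"
  unfolding deriv_sum_const_coeffs[OF assms(2)] using assms(1) tau(7) by (intro sum.cong refl) simp

lemma const_ext_mult:
  assumes "x \<in> M" "y \<in> M" shows "\<tau>' (x * y) = \<tau>' x * \<tau>' y"
proof -
  obtain I a b c where r: "frac_rep D L x I a b c" using obtain_frac_rep[OF assms(1)] .
  obtain J a' b' c' where r': "frac_rep D L y J a' b' c'" using obtain_frac_rep[OF assms(2)] .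
  note R = frac_repD[OF r] and R' = frac_repD[OF r']
  show ?thesis
    unfolding const_ext_frac_rep[OF frac_rep_mult[OF L r r']] const_ext_frac_rep[OF r]
      const_ext_frac_rep[OF r'] tau_sum_pair_index[OF R(1) R'(1) R(2) R'(2)]
      tau_sum_pair_index[OF R(1) R'(1) R(3) R'(3)]
    by simp
qed

lemma const_ext_add:
  assumes "x \<in> M" "y \<in> M" shows "\<tau>' (x + y) = \<tau>' x + \<tau>' y"
proof -
  obtain I a b c where r: "frac_rep D L x I a b c" using obtain_frac_rep[OF assms(1)] .
  obtain J a' b' c' where r': "frac_rep D L y J a' b' c'" using obtain_frac_rep[OF assms(2)] .
  note R = frac_repD[OF r] and R' = frac_repD[OF r']
  have "\<tau> (pair_prod b a' n + pair_prod a b' n) = \<tau> (pair_prod b a' n) + \<tau> (pair_prod a b' n)"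
    if "n \<in> pair_index I J" for n
    using pair_prod_mem[OF L R(3) R'(2) that] pair_prod_mem[OF L R(2) R'(3) that] by (rule tau(5))
  then have "(\<Sum>n\<in>pair_index I J. \<tau> (pair_prod b a' n + pair_prod a b' n) * pair_prod c c' n)
      = (\<Sum>n\<in>pair_index I J. \<tau> (pair_prod b a' n) * pair_prod c c' n)
        + (\<Sum>n\<in>pair_index I J. \<tau> (pair_prod a b' n) * pair_prod c c' n)"
    by (simp add: distrib_right sum.distrib[symmetric] cong: sum.cong)
  then show ?thesis
    unfolding const_ext_frac_rep[OF frac_rep_add[OF L r r']] const_ext_frac_rep[OF r]
      const_ext_frac_rep[OF r'] tau_sum_pair_index[OF R(1) R'(1) R(2) R'(2)]
      tau_sum_pair_index[OF R(1) R'(1) R(3) R'(2)] tau_sum_pair_index[OF R(1) R'(1) R(2) R'(3)]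
    using tau_denominator_nonzero[OF r] tau_denominator_nonzero[OF r'] by (simp add: field_simps)
qed

lemma const_ext_deriv:
  assumes "x \<in> M" shows "\<tau>' (D x) = D (\<tau>' x)"
proof -
  obtain I a b c where r: "frac_rep D L x I a b c" using obtain_frac_rep[OF assms] .
  note R = frac_repD[OF r]
  have Da: "\<forall>i\<in>I. D (a i) \<in> L" and Db: "\<forall>i\<in>I. D (b i) \<in> L"
    using R(2,3) dsubfieldD(7)[OF L] by auto
  define A where "A = (\<Sum>i\<in>I. \<tau> (a i) * c i)"
  define B where "B = (\<Sum>i\<in>I. \<tau> (b i) * c i)"
  have "A \<noteq> 0" unfolding A_def by (rule tau_denominator_nonzero[OF r])
  have "\<tau> (pair_prod a (\<lambda>i. D (b i)) n - pair_prod b (\<lambda>i. D (a i)) n)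
      = \<tau> (pair_prod a (\<lambda>i. D (b i)) n) - \<tau> (pair_prod b (\<lambda>i. D (a i)) n)"
    if "n \<in> pair_index I I" for n
    using pair_prod_mem[OF L R(2) Db that] pair_prod_mem[OF L R(3) Da that] by (rule tau_ring(6))
  then have "(\<Sum>n\<in>pair_index I I. \<tau> (pair_prod a (\<lambda>i. D (b i)) n - pair_prod b (\<lambda>i. D (a i)) n)
      * pair_prod c c n) = A * D B - B * D A"
    unfolding A_def B_def tau_sum_deriv[OF R(2,4)] tau_sum_deriv[OF R(3,4)]
      tau_sum_pair_index[OF R(1) R(1) R(2) Db, symmetric]
      tau_sum_pair_index[OF R(1) R(1) R(3) Da, symmetric]
    by (simp add: left_diff_distrib sum_subtractf[symmetric] cong: sum.cong)
  then show ?thesis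
    unfolding const_ext_frac_rep[OF frac_rep_deriv[OF L r]] const_ext_frac_rep[OF r]
      tau_sum_pair_index[OF R(1) R(1) R(2) R(2)] A_def[symmetric] B_def[symmetric]
    using deriv_divide[OF \<open>A \<noteq> 0\<close>, of B] by simp
qed

lemma const_ext_uminus: "x \<in> M \<Longrightarrow> \<tau>' (- x) = - \<tau>' x"
proof -
  assume "x \<in> M"
  then obtain I a b c where r: "frac_rep D L x I a b c" by (rule obtain_frac_rep)
  show ?thesis
    unfolding const_ext_frac_rep[OF frac_rep_uminus[OF L r]] const_ext_frac_rep[OF r]
    using frac_repD(3)[OF r] tau_ring(5) by (simp add: sum_negf)
qed

lemma const_ext_eq_0: "x \<in> M \<Longrightarrow> \<tau>' x = 0 \<Longrightarrow> x = 0"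
proof -
  assume "x \<in> M" "\<tau>' x = 0"
  then obtain I a b c where r: "frac_rep D L x I a b c" by (blast intro: obtain_frac_rep)
  note R = frac_repD[OF r]
  have "(\<Sum>i\<in>I. \<tau> (b i) * c i) = 0"
    using \<open>\<tau>' x = 0\<close> const_ext_frac_rep[OF r] tau_denominator_nonzero[OF r] by simp
  then have "(\<Sum>i\<in>I. b i * c i) = 0"
    using tau_reflects_const_relation[OF R(1), of b c] R(3,4) by simp
  then show "x = 0" using R(5,6) by simp
qed

lemma const_ext_inj: "inj_on \<tau>' M"
proof (rule inj_onI)
  fix x y assume xy: "x \<in> M" "y \<in> M" "\<tau>' x = \<tau>' y"
  have "\<tau>' (x - y) = 0"
    using const_ext_add[OF xy(1) dsubfieldD(5)[OF dsubfield_dgen xy(2)]] const_ext_uminus[OF xy(2)] xy(3)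
    by simp
  then have "x - y = 0" using const_ext_eq_0 dsubfieldD(8)[OF dsubfield_dgen xy(1,2)] by blast
  then show "x = y" by simp
qed

lemma const_ext_mem: "x \<in> M \<Longrightarrow> \<tau>' x \<in> M"
proof -
  assume "x \<in> M"
  then obtain I a b c where r: "frac_rep D L x I a b c" by (rule obtain_frac_rep)
  have "frac_rep D (\<tau> ` L) (\<tau>' x) I (\<lambda>i. \<tau> (a i)) (\<lambda>i. \<tau> (b i)) c"
    using frac_repD[OF r] tau_denominator_nonzero[OF r] const_ext_frac_rep[OF r]
    by (intro frac_repI) auto
  then show ?thesis using M_eq dgen_consts_iff_frac_rep[OF dsubfield_tau_image] by blast
qed

lemma const_ext_surj: "z \<in> M \<Longrightarrow> \<exists>x\<in>M. \<tau>' x = z"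
proof -
  assume "z \<in> M"
  then obtain I a b c where r: "frac_rep D (\<tau> ` L) z I a b c"
    using M_eq dgen_consts_iff_frac_rep[OF dsubfield_tau_image] by auto
  note R = frac_repD[OF r]
  define a0 where "a0 i = inv_into L \<tau> (a i)" for i
  define b0 where "b0 i = inv_into L \<tau> (b i)" for i
  have a0: "\<forall>i\<in>I. a0 i \<in> L \<and> \<tau> (a0 i) = a i" and b0: "\<forall>i\<in>I. b0 i \<in> L \<and> \<tau> (b0 i) = b i"
    using R(2,3) unfolding a0_def b0_def by (auto simp: inv_into_into f_inv_into_f)
  have "(\<Sum>i\<in>I. a0 i * c i) \<noteq> 0"
  proof
    assume "(\<Sum>i\<in>I. a0 i * c i) = 0"
    then have "(\<Sum>i\<in>I. \<tau> (a0 i) * c i) = 0"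
      using tau_preserves_const_relation[OF R(1), of a0 c] a0 R(4) by simp
    then show False using R(5) a0 by simp
  qed
  define x where "x = (\<Sum>i\<in>I. b0 i * c i) / (\<Sum>i\<in>I. a0 i * c i)"
  have rx: "frac_rep D L x I a0 b0 c"
    using a0 b0 R(1,4) \<open>(\<Sum>i\<in>I. a0 i * c i) \<noteq> 0\<close> unfolding x_def by (intro frac_repI) auto
  have "\<tau>' x = z"
    unfolding const_ext_frac_rep[OF rx] using a0 b0 R(5,6) by (simp add: divide_eq_eq mult.commute)
  moreover have "x \<in> M" using rx dgen_consts_iff_frac_rep[OF L] by blast
  ultimately show ?thesis by blast
qed

lemma const_ext_dhom: "dhom_on D M \<tau>'"
  unfolding dhom_on_def ring_hom_on_def
  using const_ext_add const_ext_mult const_ext_deriv const_ext_on_L tau(4) dsubfieldD(2)[OF L] by auto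

lemma const_ext_fixes: "x \<in> dgen D (K \<union> C) \<Longrightarrow> \<tau>' x = x"
proof -
  assume x: "x \<in> dgen D (K \<union> C)"
  have "dhom_on D M id" unfolding dhom_on_def ring_hom_on_def by simp
  moreover have "\<forall>y\<in>K \<union> C. \<tau>' y = id y" using const_ext_on_L const_ext_on_consts tau(8) KL by auto
  ultimately show ?thesis
    using dhom_on_eq_on_dgen[OF dsubfield_dgen const_ext_dhom, of id "K \<union> C" x] x KL L_subset_M
      consts_subset_M by auto
qed

lemma const_ext_Gal: "\<tau>' \<in> Gal D K L"
proof -
  have "\<tau>' ` M = M" using const_ext_mem const_ext_surj by blast
  moreover have "\<tau>' \<in> extensional M" unfolding const_ext_def by (rule restrict_extensional)
  ultimately show ?thesis
    unfolding Gal_def daut_def dHom_def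
    using const_ext_inj const_ext_dhom const_ext_fixes unfolding dhom_on_def ring_hom_on_def by auto
qed

end

section \<open>Galois groups\<close>

lemma strong_dHom_extends:
  assumes "derivation D" "dsubfield D L" "K \<subseteq> L" "\<tau> \<in> dHom D K L UNIV" "strong D L \<tau>"
  shows "const_ext D L \<tau> \<in> Gal D K L" "\<forall>x\<in>L. const_ext D L \<tau> x = \<tau> x"
proof -
  interpret strong_dHom D K L \<tau> by unfold_locales (use assms in auto)
  show "const_ext D L \<tau> \<in> Gal D K L" "\<forall>x\<in>L. const_ext D L \<tau> x = \<tau> x"
    using const_ext_Gal const_ext_on_L by auto
qed

lemma gal_small_group_embedding:
  assumes D: "derivation D" and sn: "strongly_normal D K L"
  shows "group_embedding L (gal_small D K L) (dgen D (L \<union> consts_of D UNIV)) (Gal D K L) (const_ext D L)"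
  unfolding group_embedding_def
proof (intro conjI ballI)
  let ?M = "dgen D (L \<union> consts_of D UNIV)"
  have L: "dsubfield D L" and KL: "K \<subseteq> L" and strong: "\<And>\<tau>. \<tau> \<in> dHom D K L UNIV \<Longrightarrow> strong D L \<tau>"
    using sn unfolding strongly_normal_def by auto
  have dHom: "\<sigma> \<in> dHom D K L UNIV" if "\<sigma> \<in> gal_small D K L" for \<sigma>
    using that dHom_mono[of L UNIV D K L] unfolding gal_small_def daut_def by auto
  have ext: "const_ext D L \<sigma> \<in> Gal D K L" "\<forall>x\<in>L. const_ext D L \<sigma> x = \<sigma> x"
    if "\<sigma> \<in> gal_small D K L" for \<sigma>
    using strong_dHom_extends[OF D L KL dHom[OF that] strong[OF dHom[OF that]]] by auto
  show "const_ext D L ` gal_small D K L \<subseteq> Gal D K L" using ext(1) by auto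
  show "inj_on (const_ext D L) (gal_small D K L)"
  proof (rule inj_onI)
    fix \<sigma> \<tau> assume \<sigma>\<tau>: "\<sigma> \<in> gal_small D K L" "\<tau> \<in> gal_small D K L"
      "const_ext D L \<sigma> = const_ext D L \<tau>"
    show "\<sigma> = \<tau>"
    proof (rule extensionalityI[OF dHomD(1)[OF dHom[OF \<sigma>\<tau>(1)]] dHomD(1)[OF dHom[OF \<sigma>\<tau>(2)]]])
      fix x assume "x \<in> L"
      then show "\<sigma> x = \<tau> x" using ext(2)[OF \<sigma>\<tau>(1)] ext(2)[OF \<sigma>\<tau>(2)] \<sigma>\<tau>(3) by metis
    qed
  qed
  fix \<sigma> \<tau> assume \<sigma>: "\<sigma> \<in> gal_small D K L" and \<tau>: "\<tau> \<in> gal_small D K L"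
  have \<tau>L: "\<tau> x \<in> L" if "x \<in> L" for x using \<tau> that unfolding gal_small_def daut_def by auto
  have \<sigma>\<tau>: "compose L \<sigma> \<tau> \<in> gal_small D K L"
    using compose_daut[OF L] \<sigma> \<tau> unfolding gal_small_def by blast
  have "compose ?M (const_ext D L \<sigma>) (const_ext D L \<tau>) \<in> Gal D K L"
    using compose_daut[OF dsubfield_dgen] ext(1)[OF \<sigma>] ext(1)[OF \<tau>] unfolding Gal_def by blast
  then show "const_ext D L (compose L \<sigma> \<tau>) = compose ?M (const_ext D L \<sigma>) (const_ext D L \<tau>)"
  proof (rule Gal_eqI[OF ext(1)[OF \<sigma>\<tau>]])
    have "L \<subseteq> ?M" using dgen_superset[of "L \<union> consts_of D UNIV" D] by blast
    then show "\<forall>x\<in>L. const_ext D L (compose L \<sigma> \<tau>) x = compose ?M (const_ext D L \<sigma>) (const_ext D L \<tau>) x"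
      using ext(2)[OF \<sigma>] ext(2)[OF \<tau>] \<tau>L ext(2)[OF \<sigma>\<tau>]
      by (auto simp: compose_def)
  qed
qed

lemma Gal_restrict_Gal_in:
  assumes D: "derivation D" and sn: "strongly_normal D K L" and U: "dsubfield D U" "L \<subseteq> U"
    and \<sigma>: "\<sigma> \<in> dHom D K L U" and g: "g \<in> Gal D K L" "\<forall>x\<in>L. g x = \<sigma> x"
  shows "restrict g (dgen D (L \<union> consts_of D U)) \<in> Gal_in D U K L"
proof -
  interpret diff_field D by unfold_locales (rule D)
  let ?C = "consts_of D UNIV" and ?CU = "consts_of D U"
  let ?M = "dgen D (L \<union> ?C)" and ?N = "dgen D (L \<union> ?CU)"
  have L: "dsubfield D L" and KL: "K \<subseteq> L" and strong: "strong D L \<sigma>"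
    using sn dHom_mono[of U UNIV D K L] \<sigma> unfolding strongly_normal_def by auto
  have CU: "?CU \<subseteq> ?C" and CUK: "?CU \<subseteq> dgen D (K \<union> ?C)"
    using dgen_superset[of "K \<union> ?C" D] unfolding consts_of_def by auto
  have NM: "?N \<subseteq> ?M" using CU by (intro dgen_mono) auto
  have \<sigma>L: "dsubfield D (\<sigma> ` L)" "\<sigma> ` L \<subseteq> U"
    using dsubfield_image[OF L dHom_dhom_on[OF \<sigma>]] dHomD(3)[OF \<sigma>] by auto
  have "dgen D (L \<union> ?C) = dgen D (\<sigma> ` L \<union> ?C)" using strong unfolding strong_def by simp
  then have N_eq: "?N = dgen D (\<sigma> ` L \<union> ?CU)" by (rule dgen_consts_of_eq[OF U(1) L U(2) \<sigma>L])
  have "g ` L = \<sigma> ` L" using g(2) by (intro image_cong) auto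
  moreover have "g ` ?CU = id ` ?CU" using Gal_memD(3)[OF g(1)] CUK by (intro image_cong) auto
  ultimately have g_gens: "g ` (L \<union> ?CU) = \<sigma> ` L \<union> ?CU" by (simp add: image_Un)
  have "L \<union> ?CU \<subseteq> ?M" using dgen_superset[of "L \<union> ?C" D] CU by blast
  then have "g ` ?N = dgen D (g ` (L \<union> ?CU))"
    by (rule image_dgen[OF dsubfield_dgen Gal_memD(1)[OF g(1)]])
  also have "\<dots> = ?N" unfolding g_gens N_eq ..
  finally have gN: "g ` ?N = ?N" .
  have "dgen D (K \<union> ?CU) \<subseteq> dgen D (K \<union> ?C)" by (rule dgen_mono) (use CU in blast)
  moreover have "dgen D (K \<union> ?CU) \<subseteq> ?N" by (rule dgen_mono) (use KL in blast)
  ultimately have "restrict g ?N \<in> daut D (dgen D (K \<union> ?CU)) ?N"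
    by (rule restrict_daut[OF g(1)[unfolded Gal_def] dsubfield_dgen NM gN])
  then show ?thesis unfolding Gal_in_def .
qed

theorem lemma3p11:
  fixes D :: "'a::field_char_0 \<Rightarrow> 'a" and K L U :: "'a set"
  assumes "derivation D" and "diff_closed D" and "saturated D"
    and "dsubfield D K" and "dsubfield D L" and "dsubfield D U"
    and "K \<subseteq> L" and "L \<subseteq> U"
    and "(card_of U, card_of (UNIV :: 'a set)) \<in> ordLess"
    and "strongly_normal D K L"
  shows "(\<exists>\<Phi>. group_embedding L (gal_small D K L)
                 (dgen D (L \<union> consts_of D UNIV)) (Gal D K L) \<Phi>) \<and>
         (\<forall>\<sigma>\<in>dHom D K L U.
            (\<exists>!g. g \<in> Gal D K L \<and> (\<forall>x\<in>L. g x = \<sigma> x)) \<and>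
            (\<forall>g. g \<in> Gal D K L \<and> (\<forall>x\<in>L. g x = \<sigma> x) \<longrightarrow>
               restrict g (dgen D (L \<union> consts_of D U)) \<in> Gal_in D U K L))"
proof -
  have ext: "const_ext D L \<sigma> \<in> Gal D K L" "\<forall>x\<in>L. const_ext D L \<sigma> x = \<sigma> x"
    if "\<sigma> \<in> dHom D K L U" for \<sigma>
  proof -
    have "\<sigma> \<in> dHom D K L UNIV" using that dHom_mono[of U UNIV D K L] by auto
    then show "const_ext D L \<sigma> \<in> Gal D K L" "\<forall>x\<in>L. const_ext D L \<sigma> x = \<sigma> x"
      using strong_dHom_extends[OF assms(1,5,7)] assms(10) unfolding strongly_normal_def by blast+
  qed
  have "\<exists>!g. g \<in> Gal D K L \<and> (\<forall>x\<in>L. g x = \<sigma> x)" if "\<sigma> \<in> dHom D K L U" for \<sigma>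
    using ext[OF that] Gal_eqI[of _ D K L] by (metis (no_types, lifting))
  then show ?thesis
    using gal_small_group_embedding[OF assms(1,10)] Gal_restrict_Gal_in[OF assms(1,10,6,8)] by blast
qed

end
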